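(* Let $i,j$ be positive integers and let $w,s\in\{0,1\}^*$ be $\frac{7}{3}$-power-free words such that $|w|=2^{i+1}-1$ or $|w|=3\cdot 2^i-1$, and $|s|=2^{j+1}-1$ or $|s|=3\cdot 2^j-1$. Assume also that $|s|\geq|w|$. Let $a\in\{0,1\}$. Then the word $sawawas$ contains a $\frac{7}{3}$-power (i.e., is not $\frac{7}{3}$-power-free).
   Context: A word $w'$ is a subword of $w$ if $w=uw'v$ for some words $u,v$. For a rational $\alpha\ge 1$, an $\alpha$-power is a word of the form $x^nx'$ with $x$ a nonempty word, $x'$ a prefix of $x$, $n$ a nonnegative integer and $n+|x'|/|x|=\alpha$. A word is $\alpha$-power-free if none of its subwords is a $\beta$-power for any rational $\beta\geq\alpha$; otherwise it contains an $\alpha$-power. *)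

theory Defs
  imports Complex_Main "HOL-Library.Sublist"
begin

(* Binary words over {0,1} are represented as lists of booleans. *)

definition is_power :: "rat \<Rightarrow> 'a list \<Rightarrow> bool" where
  "is_power \<beta> y \<longleftrightarrow> (\<exists>x x' n. x \<noteq> [] \<and> prefix x' x \<and>
      y = concat (replicate n x) @ x' \<and>
      of_nat n + of_nat (length x') / of_nat (length x) = \<beta>)"

definition power_free :: "rat \<Rightarrow> 'a list \<Rightarrow> bool" where
  "power_free \<alpha> w \<longleftrightarrow> \<not> (\<exists>y \<beta>. sublist y w \<and> \<beta> \<ge> \<alpha> \<and> is_power \<beta> y)"

end

theory Submission
  imports Defs
begin

text \<open>Put p = |w| + 1. Then a w a w a is a factor of length 2p + 1 with period p, and the two
  copies of s provide at least p - 3 further letters on each side of it. For p = 3 * 2^k and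
  p = 4 * 2^k such a padded overlap cannot occur in a binary word without 7/3-powers. The base
  cases p = 3 and p = 4 are finite checks. For the doubling step, note that in such a word two
  equal adjacent letters (away from the ends) can only occur at positions of one fixed parity,
  so the word splits into blocks 01 and 10. Keeping the first letter of every block is a
  decimation that creates no 7/3-power and turns a padded overlap of period 2p into one of
  period p.\<close>

definition has_73_power :: "'a list \<Rightarrow> bool" where
  "has_73_power X \<longleftrightarrow> (\<exists>i l q. 0 < q \<and> 7 * q \<le> 3 * l \<and> i + l \<le> length X \<and>
     (\<forall>k. k + q < l \<longrightarrow> X ! (i + k) = X ! (i + k + q)))"

lemma has_73_powerI:
  assumes "0 < q" "7 * q \<le> 3 * l" "i + l \<le> length X"
    and "\<And>k. k + q < l \<Longrightarrow> X ! (i + k) = X ! (i + k + q)"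
  shows "has_73_power X"
  unfolding has_73_power_def using assms by blast

lemma nth_concat_replicate:
  assumes "k < n * length x"
  shows "concat (replicate n x) ! k = x ! (k mod length x)"
  using assms
proof (induction n arbitrary: k)
  case 0
  then show ?case by simp
next
  case (Suc n)
  show ?case
  proof (cases "k < length x")
    case True
    then show ?thesis by (simp add: nth_append)
  next
    case False
    then have "concat (replicate n x) ! (k - length x) = x ! ((k - length x) mod length x)"
      using Suc by (intro Suc.IH) auto
    with False show ?thesis by (simp add: nth_append mod_if)
  qed
qed

lemma nth_mod_period:
  assumes "0 < q" "\<And>k. k + q < length y \<Longrightarrow> y ! k = y ! (k + q)" "k < length y"
  shows "y ! k = y ! (k mod q)"
  using assms(3)
proof (induction k rule: less_induct)
  case (less k)
  show ?case
  proof (cases "k < q")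
    case False
    then have "y ! k = y ! (k - q)" using assms(2)[of "k - q"] less.prems by simp
    also have "\<dots> = y ! ((k - q) mod q)" using less assms(1) False by simp
    finally show ?thesis using False by (simp add: mod_if)
  qed simp
qed

lemma periodic_eq_concat_replicate:
  assumes "0 < q" "q \<le> length y" "\<And>k. k + q < length y \<Longrightarrow> y ! k = y ! (k + q)"
  shows "y = concat (replicate (length y div q) (take q y)) @ take (length y mod q) (take q y)"
    (is "y = ?pow @ ?rest")
proof (rule nth_equalityI)
  have len_pow: "length ?pow = length y div q * q"
    using assms(2) by (simp add: length_concat sum_list_replicate)
  then show "length y = length (?pow @ ?rest)"
    using assms(1,2) by simp
  fix k assume k: "k < length y"
  have "(?pow @ ?rest) ! k = take q y ! (k mod q)"
  proof (cases "k < length y div q * q")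
    case True
    then show ?thesis
      using assms(2) len_pow nth_concat_replicate[of k _ "take q y"] by (simp add: nth_append)
  next
    case False
    define r where "r = k - length y div q * q"
    have k_eq: "k = length y div q * q + r" using False unfolding r_def by simp
    have "r < length y mod q"
      using k False div_mult_mod_eq[of "length y" q] unfolding r_def by linarith
    then have "r < q" "r < length y mod q"
      using mod_less_divisor[OF assms(1)] less_trans by blast+
    then have "r = k mod q" by (simp add: k_eq)
    have "(?pow @ ?rest) ! k = ?rest ! r"
      using False len_pow by (simp add: nth_append r_def)
    also have "\<dots> = take q y ! r"
      using \<open>r < length y mod q\<close> \<open>r < q\<close> by simp
    finally show ?thesis using \<open>r = k mod q\<close> by simp
  qed
  also have "\<dots> = y ! k"
    using nth_mod_period[OF assms(1,3) k] assms(1) by simp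
  finally show "y ! k = (?pow @ ?rest) ! k" by simp
qed

lemma periodic_is_power:
  assumes "0 < q" "q \<le> length y" "\<And>k. k + q < length y \<Longrightarrow> y ! k = y ! (k + q)"
  shows "is_power (of_nat (length y) / of_nat q) y"
proof -
  let ?x = "take q y" and ?x' = "take (length y mod q) (take q y)"
  have x: "?x \<noteq> []" "length ?x = q" "length ?x' = length y mod q"
    using assms(1,2) by auto
  have "prefix ?x' ?x" by (rule take_is_prefix)
  have ratio: "of_nat (length y) / of_nat q
      = of_nat (length y div q) + of_nat (length y mod q) / (of_nat q :: rat)"
    using assms(1) by (simp add: field_simps flip: of_nat_mult of_nat_add)
  show ?thesis
    unfolding is_power_def
    by (rule exI[of _ ?x], rule exI[of _ ?x'], rule exI[of _ "length y div q"])
      (use x \<open>prefix ?x' ?x\<close> ratio periodic_eq_concat_replicate[OF assms] in auto)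
qed

lemma has_73_power_not_power_free:
  assumes "has_73_power X"
  shows "\<not> power_free (7/3) X"
proof -
  obtain i l q where q: "0 < q" "7 * q \<le> 3 * l" "i + l \<le> length X"
    and per: "\<And>k. k + q < l \<Longrightarrow> X ! (i + k) = X ! (i + k + q)"
    using assms unfolding has_73_power_def by blast
  define y where "y = take l (drop i X)"
  have len_y: "length y = l" using q(3) by (simp add: y_def)
  have "is_power (of_nat l / of_nat q) y"
    using periodic_is_power[of q y] q per by (simp add: len_y y_def add.assoc)
  moreover have "sublist y X"
    unfolding y_def by (metis append_take_drop_id sublist_appendI)
  moreover have "(7 :: rat) * of_nat q \<le> 3 * of_nat l"
    using q(2) by (metis of_nat_le_iff of_nat_mult of_nat_numeral)
  then have "(7/3 :: rat) \<le> of_nat l / of_nat q"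
    using q(1) by (simp add: field_simps)
  ultimately show ?thesis unfolding power_free_def by blast
qed

lemma has_73_power_factor:
  assumes "i + n \<le> length X" "has_73_power (map (\<lambda>k. X ! (i + k)) [0..<n])"
  shows "has_73_power X"
proof -
  obtain j l q where q: "0 < q" "7 * q \<le> 3 * l" "j + l \<le> n"
    and per: "\<And>k. k + q < l \<Longrightarrow> X ! (i + (j + k)) = X ! (i + (j + k + q))"
    using assms(2) unfolding has_73_power_def by auto
  show ?thesis
    by (rule has_73_powerI[of q l "i + j"]) (use q per assms(1) in \<open>auto simp: add.assoc\<close>)
qed

lemma has_73_power_cube:
  assumes "X ! i = X ! (i + 1)" "X ! (i + 1) = X ! (i + 2)" "i + 3 \<le> length X"
  shows "has_73_power X"
proof (rule has_73_powerI[of 1 3 i])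
  fix k :: nat
  assume "k + 1 < 3"
  then have "k = 0 \<or> k = 1" by auto
  then show "X ! (i + k) = X ! (i + k + 1)" using assms by auto
qed (use assms in auto)

text \<open>Periods q \<le> 4, each with the shortest length l satisfying 7q \<le> 3l; these suffice for
  the short words checked below.\<close>
lemma has_73_power_if_search:
  assumes "\<exists>(q, l) \<in> {(1, 3), (2, 5), (3, 7), (4, 10)}. \<exists>i < length X.
     i + l \<le> length X \<and> (\<forall>k < l - q. X ! (i + k) = X ! (i + k + q))"
  shows "has_73_power X"
proof -
  obtain q l i where ql: "(q, l) \<in> {(1, 3), (2, 5), (3, 7), (4, 10)}" and "i + l \<le> length X"
    and per: "\<forall>k < l - q. X ! (i + k) = X ! (i + k + q)"
    using assms by blast
  show ?thesis
    by (rule has_73_powerI[of q l i])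
      (use ql \<open>i + l \<le> length X\<close> per in \<open>auto simp: less_diff_conv\<close>)
qed

lemmas bounded_search_simps = numeral_eq_Suc Ex_less_Suc All_less_Suc

lemma has_73_power_alternating:
  fixes a b c d e :: bool
  assumes "a \<noteq> b" "b \<noteq> c" "c \<noteq> d" "d \<noteq> e"
  shows "has_73_power [a, b, c, d, e]"
  using assms by (intro has_73_power_if_search)
    (cases a; cases b; cases c; cases d; cases e; simp add: bounded_search_simps)

lemma has_73_power_doubles_at_distance_3:
  fixes a b c d e :: bool
  shows "has_73_power [c, a, a, b, d, d, e]"
  by (intro has_73_power_if_search)
    (cases a; cases b; cases c; cases d; cases e; simp add: bounded_search_simps)

lemma has_73_power_padded_overlap_4:
  fixes a b c d x y :: bool
  shows "has_73_power [x, a, b, c, d, a, b, c, d, a, y]"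
  by (intro has_73_power_if_search)
    (cases x; cases a; cases b; cases c; cases d; cases y; simp add: bounded_search_simps)

lemma equal_neighbours_same_parity:
  fixes X :: "bool list"
  assumes "\<not> has_73_power X"
  shows "1 \<le> i \<Longrightarrow> i < j \<Longrightarrow> j + 3 \<le> length X \<Longrightarrow> X ! i = X ! (i + 1) \<Longrightarrow>
    X ! j = X ! (j + 1) \<Longrightarrow> even (j - i)"
proof (induction "j - i" arbitrary: i j rule: less_induct)
  case less
  consider "j = i + 1" | "j = i + 2" | "j = i + 3" | "i + 4 \<le> j"
    using less.prems(2) by linarith
  then show ?case
  proof cases
    case 1
    then show ?thesis using has_73_power_cube[of X i] less.prems assms by auto
  next
    case 2
    then show ?thesis by simp
  next
    case 3
    have "map (\<lambda>k. X ! (i - 1 + k)) [0..<7] =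
      [X ! (i - 1), X ! i, X ! i, X ! (i + 2), X ! (i + 3), X ! (i + 3), X ! (i + 5)]"
      using less.prems 3 by (simp add: numeral_eq_Suc)
    then have "has_73_power X"
      using has_73_power_factor[of "i - 1" 7 X] has_73_power_doubles_at_distance_3 less.prems 3
      by simp
    with assms show ?thesis by contradiction
  next
    case 4
    show ?thesis
    proof (cases "\<exists>k. i < k \<and> k < j \<and> X ! k = X ! (k + 1)")
      case True
      then obtain k where k: "i < k" "k < j" "X ! k = X ! (k + 1)" by blast
      have "even (k - i)" "even (j - k)"
        using less.hyps[of k i] less.hyps[of j k] less.prems k by auto
      with k show ?thesis by presburger
    next
      case False
      show ?thesis
      proof (rule ccontr)
        assume "odd (j - i)"
        with 4 have "i + 5 \<le> j" by presburger
        define f where "f k = X ! (i + k)" for k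
        have alternating: "f k \<noteq> f (k + 1)" if "0 < k" "k < 5" for k
        proof -
          have "i < i + k" "i + k < j" using that \<open>i + 5 \<le> j\<close> by auto
          with False show ?thesis unfolding f_def add.assoc[symmetric] by blast
        qed
        have "has_73_power [f 1, f 2, f 3, f 4, f 5]"
          by (rule has_73_power_alternating)
            (use alternating[of 1] alternating[of 2] alternating[of 3] alternating[of 4] in
              \<open>simp_all add: numeral_eq_Suc\<close>)
        moreover have "map (\<lambda>k. X ! (i + 1 + k)) [0..<5] = [f 1, f 2, f 3, f 4, f 5]"
          unfolding f_def by (simp add: numeral_eq_Suc)
        ultimately have "has_73_power X"
          using has_73_power_factor[of "i + 1" 5 X] \<open>i + 5 \<le> j\<close> less.prems by simp
        with assms show False by contradiction
      qed
    qed
  qed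
qed

lemma has_73_power_decimation:
  fixes X :: "bool list"
  assumes len: "st + 2 * n \<le> length X"
    and blocks: "\<And>k. k < n \<Longrightarrow> X ! (st + 2 * k) \<noteq> X ! (st + 2 * k + 1)"
    and "has_73_power (map (\<lambda>k. X ! (st + 2 * k)) [0..<n])"
  shows "has_73_power X"
proof -
  obtain i l q where q: "0 < q" "7 * q \<le> 3 * l" "i + l \<le> n"
    and per: "\<And>k. k + q < l \<Longrightarrow> X ! (st + 2 * (i + k)) = X ! (st + 2 * (i + k + q))"
    using assms(3) unfolding has_73_power_def by auto
  show ?thesis
  proof (rule has_73_powerI[of "2 * q" "2 * l" "st + 2 * i"])
    fix k assume k: "k + 2 * q < 2 * l"
    define h where "h = k div 2"
    define u v where "u = st + 2 * (i + h)" and "v = st + 2 * (i + h + q)"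
    have "h + q < l" using k unfolding h_def by linarith
    then have "X ! u = X ! v"
      unfolding u_def v_def by (rule per)
    moreover have "X ! u \<noteq> X ! (u + 1)" "X ! v \<noteq> X ! (v + 1)"
      unfolding u_def v_def using blocks[of "i + h"] blocks[of "i + h + q"] \<open>h + q < l\<close> q(3)
      by (simp_all add: algebra_simps)
    ultimately have "X ! (u + r) = X ! (v + r)" if "r < 2" for r
      using that by (cases r) auto
    moreover have "st + 2 * i + k = u + k mod 2" "st + 2 * i + k + 2 * q = v + k mod 2"
      unfolding u_def v_def h_def by simp_all
    ultimately show "X ! (st + 2 * i + k) = X ! (st + 2 * i + k + 2 * q)"
      by (metis mod_less_divisor zero_less_numeral)
  qed (use q len in auto)
qed

lemma block_start_avoiding_doubles:
  fixes X :: "bool list"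
  assumes "\<not> has_73_power X"
  obtains st where "st \<in> {1, 2}"
    and "\<And>j. st \<le> j \<Longrightarrow> even j = even st \<Longrightarrow> j + 3 \<le> length X \<Longrightarrow> X ! j \<noteq> X ! (j + 1)"
proof (cases "\<exists>j\<^sub>0. 1 \<le> j\<^sub>0 \<and> j\<^sub>0 + 3 \<le> length X \<and> X ! j\<^sub>0 = X ! (j\<^sub>0 + 1)")
  case True
  then obtain j\<^sub>0 where j\<^sub>0: "1 \<le> j\<^sub>0" "j\<^sub>0 + 3 \<le> length X" "X ! j\<^sub>0 = X ! (j\<^sub>0 + 1)"
    by blast
  have same_parity: "even j = even j\<^sub>0"
    if "1 \<le> j" "j + 3 \<le> length X" "X ! j = X ! (j + 1)" for j
  proof (cases j\<^sub>0 j rule: linorder_cases)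
    case less
    then have "even (j - j\<^sub>0)"
      using equal_neighbours_same_parity[OF assms] j\<^sub>0 that by blast
    with less show ?thesis by presburger
  next
    case greater
    then have "even (j\<^sub>0 - j)"
      using equal_neighbours_same_parity[OF assms] j\<^sub>0 that by blast
    with greater show ?thesis by presburger
  qed simp
  define st where "st = (if even j\<^sub>0 then 1 else 2 :: nat)"
  have st: "st \<in> {1, 2}" "odd (st + j\<^sub>0)" unfolding st_def by auto
  show ?thesis
  proof (rule that[OF st(1)])
    fix j assume j: "st \<le> j" "even j = even st" "j + 3 \<le> length X"
    show "X ! j \<noteq> X ! (j + 1)"
    proof
      assume "X ! j = X ! (j + 1)"
      with j st(1) have "even j = even j\<^sub>0" by (intro same_parity) auto
      with j(2) st(2) show False by simp
    qed
  qed
next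
  case False
  then show ?thesis by (intro that[of 1]) auto
qed

lemma overlap_shift_left:
  fixes X :: "bool list"
  assumes "0 < m" "\<forall>k\<le>q. X ! (m + k) = X ! (m + q + k)"
    and "X ! (m - 1) \<noteq> X ! m" "X ! (m - 1 + q) \<noteq> X ! (m + q)"
  shows "\<forall>k\<le>q. X ! (m - 1 + k) = X ! (m - 1 + q + k)"
proof (intro allI impI)
  fix k assume k: "k \<le> q"
  show "X ! (m - 1 + k) = X ! (m - 1 + q + k)"
  proof (cases k)
    case 0
    then show ?thesis using assms(2)[rule_format, of 0] assms(3,4) by auto
  next
    case (Suc h)
    then show ?thesis using assms(1,2) k by auto
  qed
qed

lemma overlap_at_block_parity:
  fixes X :: "bool list"
  assumes blocks: "\<And>j. st \<le> j \<Longrightarrow> even j = even st \<Longrightarrow> j + 3 \<le> length X \<Longrightarrow> X ! j \<noteq> X ! (j + 1)"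
    and "even q" "st < m" "m + q + 2 \<le> length X" and overlap: "\<forall>k\<le>q. X ! (m + k) = X ! (m + q + k)"
  obtains m' where "m' \<in> {m - 1, m}" "even m' = even st" "\<forall>k\<le>q. X ! (m' + k) = X ! (m' + q + k)"
proof (cases "even m = even st")
  case True
  then show ?thesis using overlap by (intro that[of m]) auto
next
  case False
  have "X ! (m - 1) \<noteq> X ! m" "X ! (m - 1 + q) \<noteq> X ! (m + q)"
    using blocks[of "m - 1"] blocks[of "m - 1 + q"] False assms(2-4) by auto
  then show ?thesis
    using overlap_shift_left[OF _ overlap] False assms(3) by (intro that[of "m - 1"]) auto
qed

text \<open>The factor of length 2p + 1 at position m has period p and at least p - 3 letters of X on
  either side; this padding is exactly what survives one decimation step.\<close>
definition no_padded_overlap :: "nat \<Rightarrow> bool" where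
  "no_padded_overlap p \<longleftrightarrow> (\<forall>(X :: bool list) m. \<not> has_73_power X \<longrightarrow> p - 3 \<le> m \<longrightarrow>
     m + 3 * p - 2 \<le> length X \<longrightarrow> \<not> (\<forall>k\<le>p. X ! (m + k) = X ! (m + p + k)))"

lemma no_padded_overlapD:
  fixes X :: "bool list"
  assumes "no_padded_overlap p" "\<not> has_73_power X" "p - 3 \<le> m" "m + 3 * p - 2 \<le> length X"
    and "\<forall>k\<le>p. X ! (m + k) = X ! (m + p + k)"
  shows False
  using assms unfolding no_padded_overlap_def by blast

lemma no_padded_overlap_3: "no_padded_overlap 3"
  unfolding no_padded_overlap_def
proof (intro allI impI notI)
  fix X :: "bool list" and m
  assume "\<not> has_73_power X" "m + 3 * 3 - 2 \<le> length X"
    and overlap: "\<forall>k\<le>3. X ! (m + k) = X ! (m + 3 + k)"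
  have "has_73_power X"
  proof (rule has_73_powerI[of 3 7 m])
    fix k :: nat assume "k + 3 < 7"
    then show "X ! (m + k) = X ! (m + k + 3)"
      using overlap[rule_format, of k] by (simp add: ac_simps)
  qed (use \<open>m + 3 * 3 - 2 \<le> length X\<close> in auto)
  with \<open>\<not> has_73_power X\<close> show False by contradiction
qed

lemma no_padded_overlap_4: "no_padded_overlap 4"
  unfolding no_padded_overlap_def
proof (intro allI impI notI)
  fix X :: "bool list" and m
  assume "\<not> has_73_power X" "4 - 3 \<le> m" "m + 3 * 4 - 2 \<le> length X"
    and overlap: "\<forall>k\<le>4. X ! (m + k) = X ! (m + 4 + k)"
  moreover have "map (\<lambda>k. X ! (m - 1 + k)) [0..<11] = [X ! (m - 1), X ! m, X ! (m + 1), X ! (m + 2),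
      X ! (m + 3), X ! m, X ! (m + 1), X ! (m + 2), X ! (m + 3), X ! m, X ! (m + 9)]"
    using overlap[rule_format, of 0] overlap[rule_format, of 1] overlap[rule_format, of 2]
      overlap[rule_format, of 3] overlap[rule_format, of 4] \<open>4 - 3 \<le> m\<close>
    by (simp add: numeral_eq_Suc)
  ultimately show False
    using has_73_power_factor[of "m - 1" 11 X] has_73_power_padded_overlap_4 by simp
qed

lemma no_padded_overlap_double:
  assumes "no_padded_overlap p" "3 \<le> p"
  shows "no_padded_overlap (2 * p)"
  unfolding no_padded_overlap_def
proof (intro allI impI notI)
  fix X :: "bool list" and m
  assume nb: "\<not> has_73_power X" and m: "2 * p - 3 \<le> m" "m + 3 * (2 * p) - 2 \<le> length X"
    and overlap: "\<forall>k\<le>2 * p. X ! (m + k) = X ! (m + 2 * p + k)"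
  obtain st where st: "st \<in> {1, 2}"
    and blocks: "\<And>j. st \<le> j \<Longrightarrow> even j = even st \<Longrightarrow> j + 3 \<le> length X \<Longrightarrow> X ! j \<noteq> X ! (j + 1)"
    using block_start_avoiding_doubles[OF nb] by blast
  have "even (2 * p)" "st < m" "m + 2 * p + 2 \<le> length X"
    using st m assms(2) by auto
  then obtain m' where m': "m' \<in> {m - 1, m}" "even m' = even st"
    and overlap': "\<forall>k\<le>2 * p. X ! (m' + k) = X ! (m' + 2 * p + k)"
    using overlap_at_block_parity[OF blocks _ _ _ overlap] by blast
  define l where "l = (m' - st) div 2"
  define n where "n = (length X - 1 - st) div 2"
  define Y where "Y = map (\<lambda>k. X ! (st + 2 * k)) [0..<n]"
  have m'_eq: "m' = st + 2 * l"
    using m' st m assms(2) unfolding l_def by auto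
  have "st + 1 \<le> length X"
    using st m assms(2) by auto
  then have "st + 2 * n + 1 \<le> length X"
    unfolding n_def by presburger
  then have "X ! (st + 2 * k) \<noteq> X ! (st + 2 * k + 1)" if "k < n" for k
    using blocks[of "st + 2 * k"] that by simp
  then have "\<not> has_73_power Y"
    using has_73_power_decimation[of st n X] \<open>st + 2 * n + 1 \<le> length X\<close> nb
    unfolding Y_def by auto
  moreover have "p - 3 \<le> l" "l + 3 * p - 2 \<le> length Y"
    using m'_eq m' m st assms(2) unfolding Y_def n_def by auto
  moreover have "\<forall>k\<le>p. Y ! (l + k) = Y ! (l + p + k)"
  proof (intro allI impI)
    fix k assume "k \<le> p"
    then have "l + p + k < n"
      using m'_eq m' m st assms(2) unfolding n_def by auto
    then show "Y ! (l + k) = Y ! (l + p + k)"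
      using overlap'[rule_format, of "2 * k"] \<open>k \<le> p\<close> m'_eq unfolding Y_def
      by (simp add: algebra_simps)
  qed
  ultimately show False
    using no_padded_overlapD[OF assms(1)] by blast
qed

lemma no_padded_overlap_mult_power2:
  assumes "no_padded_overlap p" "3 \<le> p"
  shows "no_padded_overlap (p * 2 ^ k)"
proof (induction k)
  case 0
  then show ?case using assms(1) by simp
next
  case (Suc k)
  have "p \<le> p * 2 ^ k" by simp
  with assms(2) have "3 \<le> p * 2 ^ k" by linarith
  then show ?case using no_padded_overlap_double[OF Suc.IH] by (simp add: algebra_simps)
qed

lemma sawawas_overlap:
  assumes "k \<le> length w + 1"
  shows "(s @ [a] @ w @ [a] @ w @ [a] @ s) ! (length s + k)
    = (s @ [a] @ w @ [a] @ w @ [a] @ s) ! (length s + (length w + 1) + k)"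
  using assms by (cases "k \<le> length w") (auto simp: nth_append nth_Cons')

theorem lemma7:
  fixes w s :: "bool list" and a :: bool and i j :: nat
  assumes "i > 0" and "j > 0"
    and "power_free (7/3) w" and "power_free (7/3) s"
    and "length w = 2 ^ (i + 1) - 1 \<or> length w = 3 * 2 ^ i - 1"
    and "length s = 2 ^ (j + 1) - 1 \<or> length s = 3 * 2 ^ j - 1"
    and "length s \<ge> length w"
  shows "\<not> power_free (7/3) (s @ [a] @ w @ [a] @ w @ [a] @ s)"
proof
  let ?X = "s @ [a] @ w @ [a] @ w @ [a] @ s" and ?p = "length w + 1"
  assume "power_free (7/3) ?X"
  then have "\<not> has_73_power ?X" using has_73_power_not_power_free by blast
  have "?p = 4 * 2 ^ (i - 1) \<or> ?p = 3 * 2 ^ i"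
    using assms(1,5) by (cases i) auto
  then have "no_padded_overlap ?p"
    using no_padded_overlap_mult_power2[OF no_padded_overlap_3]
      no_padded_overlap_mult_power2[OF no_padded_overlap_4] by (auto simp: mult.commute)
  moreover note \<open>\<not> has_73_power ?X\<close>
  moreover have "?p - 3 \<le> length s" "length s + 3 * ?p - 2 \<le> length ?X"
    using assms(7) by auto
  moreover have "\<forall>k\<le>?p. ?X ! (length s + k) = ?X ! (length s + ?p + k)"
    by (intro allI impI sawawas_overlap)
  ultimately show False
    by (rule no_padded_overlapD)
qed

end
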